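(* For all integers $n,f,k$ with $1\le f\le n-1$ and $1\le k\le n$, the task $k\text{-TAg}(n+1,f)$ is $C^*$-reducible to $k\text{-TAg}(n,f)$. (The algorithm of the preceding $C^*$-reduction, with $\Pi=\{1,\dots,n+1\}$, $\Pi_i=\Pi\setminus\{i\}$, in which each process $i$ queries the oracles $\mathcal O.k\text{-TAg}(\Pi_l,f)$, $l\ne i$, in order with its initial value and broadcasts each answer, but finally decides $\min_l w_l$ instead of $\max_l w_l$, solves $k\text{-TAg}(\Pi,f)$.)
   Context: Model: a finite set of processes runs an asynchronous algorithm communicating by reliable message passing with unbounded delays and speeds; processes fail only by crashing. Time is $\mathcal T=\mathbb N$; a failure pattern $F$ for $\Pi$ is a nondecreasing map $\mathcal T\to2^\Pi$, $Faulty(F)=\bigcup_tF(t)$. A binary agreement problem $P$ for $\Pi$ maps each $(F,\vec V)$, $\vec V\in\{0,1\}^\Pi$, to a nonempty $P(F,\vec V)\subseteq\{0,1\}$; a task is $T=(P,f)$. An algorithm solves $T$ if in every run with $|Faulty(F)|\le f$ and initial values $\vec V$: every correct process eventually decides, decisions are irrevocable, no two processes decide differently, and decisions lie in $P(F,\vec V)$. $k\text{-TAg}_\Pi(F,\vec V)=\{0\}$ if at least $k$ entries of $\vec V$ are $0$; $=\{1\}$ if $\vec V$ is all-ones and $|Faulty(F)|\le k-1$; $=\{0,1\}$ otherwise; $k\text{-TAg}(\Pi,f)=(k\text{-TAg}_\Pi,f)$; $k\text{-TAg}(n,f)=k\text{-TAg}(\{1,\dots,n\},f)$. Oracles: for $T=(P,f)$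 on process set $\Pi'$, $\mathcal O.T$ is a black box with consultants $\Pi'$; its history is a sequence of successive consultations, in each of which every consultant may submit at most one query in $\{0,1\}$ and the oracle returns a common response $d$ with $d\in P(F,\vec V)$ for every $\vec V$ extending the partial query vector (the oracle may use the whole failure pattern, including future crashes), and every correct querier gets the response whenever at least $|\Pi'|-f$ consultants query; $\mathcal O.T$ is the most general such oracle. $C^*$-reduction: $T_1\le_{C^*}T_2$ if there is an algorithm solving $T_1$ whose processes may additionally consult any finite collection of oracles $\mathcal O.T_2^{(j)}$, each $T_2^{(j)}$ being a copy of $T_2$ whose processes are renamed into (a subset of) the processes of $T_1$. *)

theory Defs
  imports Main
begin

type_synonym proc = nat

text \<open>A failure pattern maps each time to the set of processes crashed by that time.\<close>
type_synonym fpat = "nat \<Rightarrow> proc set"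

definition failure_pattern :: "proc set \<Rightarrow> fpat \<Rightarrow> bool" where
  "failure_pattern \<Pi> F \<longleftrightarrow> mono F \<and> (\<forall>t. F t \<subseteq> \<Pi>)"

definition Faulty :: "fpat \<Rightarrow> proc set" where
  "Faulty F = (\<Union>t. F t)"

text \<open>A (binary agreement) problem maps a failure pattern and an input vector to the set
  of admissible decision values (values 0 and 1 are represented as naturals).\<close>
type_synonym problem = "fpat \<Rightarrow> (proc \<Rightarrow> nat) \<Rightarrow> nat set"

record task =
  procs :: "proc set"
  prob  :: problem
  res   :: nat

definition ktag_prob :: "proc set \<Rightarrow> nat \<Rightarrow> problem" where
  "ktag_prob \<Pi> k F V =
     (if k \<le> card {p \<in> \<Pi>. V p = 0} then {0}
      else if (\<forall>p\<in>\<Pi>. V p = 1) \<and> card (Faulty F) \<le> k - 1 then {1}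
      else {0, 1})"

definition kTAg :: "proc set \<Rightarrow> nat \<Rightarrow> nat \<Rightarrow> task" where
  "kTAg \<Pi> k f = \<lparr>procs = \<Pi>, prob = ktag_prob \<Pi> k, res = f\<rparr>"

definition kTAg_n :: "nat \<Rightarrow> nat \<Rightarrow> nat \<Rightarrow> task" where
  "kTAg_n n k f = kTAg {1..n} k f"

definition renamed_copy :: "task \<Rightarrow> (proc \<Rightarrow> proc) \<Rightarrow> task" where
  "renamed_copy T \<rho> =
     \<lparr>procs = \<rho> ` procs T,
      prob = (\<lambda>F' V'. prob T (\<lambda>t. {p \<in> procs T. \<rho> p \<in> F' t}) (V' \<circ> \<rho>)),
      res = res T\<rparr>"

text \<open>Input of a single step: nothing, the receipt of one message (sender, content),
  or a response of oracle \<open>j\<close> to consultation \<open>c\<close> with value \<open>d\<close>.\<close>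
datatype 'm input = Null | Recv proc 'm | Resp nat nat nat

text \<open>A deterministic algorithm: initial state from the initial value; a step maps the
  current state and the input to the new state, a list of messages to send
  (destination, content) and a list of oracle queries (oracle index, query value);
  the decision (if any) is read off the local state.\<close>
record ('s, 'm) algo =
  ainit  :: "proc \<Rightarrow> nat \<Rightarrow> 's"
  atrans :: "proc \<Rightarrow> 's \<Rightarrow> 'm input \<Rightarrow> 's \<times> (proc \<times> 'm) list \<times> (nat \<times> nat) list"
  adec   :: "'s \<Rightarrow> nat option"

definition step_out ::
  "('s,'m) algo \<Rightarrow> (nat \<Rightarrow> proc \<Rightarrow> 's) \<Rightarrow> (nat \<Rightarrow> proc option) \<Rightarrow> (nat \<Rightarrow> 'm input) \<Rightarrow> nat
    \<Rightarrow> (proc \<times> 'm) list \<times> (nat \<times> nat) list" where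
  "step_out A st act inp t =
     (case act t of None \<Rightarrow> ([], []) | Some p \<Rightarrow> snd (atrans A p (st t p) (inp t)))"

definition sends where
  "sends A st act inp t = fst (step_out A st act inp t)"

definition queries where
  "queries A st act inp t = snd (step_out A st act inp t)"

text \<open>The \<open>c\<close>-th query of \<open>p\<close> to oracle \<open>j\<close> is its query in consultation \<open>c\<close>.\<close>
definition qlist where
  "qlist A st act inp j p t =
     concat (map (\<lambda>t'. if act t' = Some p
                        then map snd (filter (\<lambda>q. fst q = j) (queries A st act inp t'))
                        else []) [0..<t])"

definition queried where
  "queried A st act inp C j c p v \<longleftrightarrow>
     p \<in> C \<and> (\<exists>t. c < length (qlist A st act inp j p t) \<and> qlist A st act inp j p t ! c = v)"

definition valid_resp where
  "valid_resp A st act inp Oc F j c d \<longleftrightarrow>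
     (\<forall>V'. (\<forall>p\<in>procs Oc. V' p \<in> {0, 1}) \<and>
           (\<forall>p v. queried A st act inp (procs Oc) j c p v \<longrightarrow> V' p = v)
        \<longrightarrow> d \<in> prob Oc (\<lambda>t. F t \<inter> procs Oc) V')"

definition recv_events where
  "recv_events act inp = {t. act t \<noteq> None \<and> (\<exists>p m. inp t = Recv p m)}"

text \<open>Admissible runs of algorithm \<open>A\<close> on processes \<open>\<Pi>\<close> using the oracles \<open>Os\<close>, with
  failure pattern \<open>F\<close> and initial values \<open>V\<close>: \<open>st t p\<close> is the state of \<open>p\<close> at time \<open>t\<close>,
  \<open>act t\<close> the process taking a step at time \<open>t\<close> (if any) and \<open>inp t\<close> its input.\<close>
definition is_run ::
  "('s,'m) algo \<Rightarrow> proc set \<Rightarrow> task list \<Rightarrow> fpat \<Rightarrow> (proc \<Rightarrow> nat)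
    \<Rightarrow> (nat \<Rightarrow> proc \<Rightarrow> 's) \<Rightarrow> (nat \<Rightarrow> proc option) \<Rightarrow> (nat \<Rightarrow> 'm input) \<Rightarrow> bool" where
  "is_run A \<Pi> Os F V st act inp \<longleftrightarrow>
     \<comment> \<open>initial states\<close>
     (\<forall>p. st 0 p = ainit A p (V p)) \<and>
     \<comment> \<open>steps: only non-crashed processes of \<open>\<Pi>\<close> step\<close>
     (\<forall>t. case act t of
            None \<Rightarrow> st (Suc t) = st t
          | Some p \<Rightarrow> p \<in> \<Pi> \<and> p \<notin> F t \<and>
                     st (Suc t) = (st t)(p := fst (atrans A p (st t p) (inp t)))) \<and>
     \<comment> \<open>every correct process takes infinitely many steps\<close>
     (\<forall>p \<in> \<Pi> - Faulty F. \<forall>t. \<exists>t' \<ge> t. act t' = Some p) \<and>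
     \<comment> \<open>reliable channels: every receipt matches a distinct earlier send, and every message
        sent to a correct process is eventually received\<close>
     (\<exists>\<mu> :: nat \<Rightarrow> nat \<times> nat.
        inj_on \<mu> (recv_events act inp) \<and>
        (\<forall>t q p m. act t = Some q \<and> inp t = Recv p m \<longrightarrow>
            fst (\<mu> t) < t \<and> act (fst (\<mu> t)) = Some p \<and>
            snd (\<mu> t) < length (sends A st act inp (fst (\<mu> t))) \<and>
            sends A st act inp (fst (\<mu> t)) ! snd (\<mu> t) = (q, m)) \<and>
        (\<forall>t' i. i < length (sends A st act inp t') \<and>
                fst (sends A st act inp t' ! i) \<in> \<Pi> - Faulty F \<longrightarrow>
                (\<exists>t \<in> recv_events act inp. \<mu> t = (t', i)))) \<and>
     \<comment> \<open>oracles: common response \<open>dd j c\<close> per consultation \<open>c\<close> of oracle \<open>j\<close>\<close>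
     (\<exists>dd :: nat \<Rightarrow> nat \<Rightarrow> nat.
        (\<forall>t p j c d. act t = Some p \<and> inp t = Resp j c d \<longrightarrow>
            j < length Os \<and> p \<in> procs (Os ! j) \<and>
            c < length (qlist A st act inp j p t) \<and>
            d = dd j c \<and> valid_resp A st act inp (Os ! j) F j c d \<and>
            (\<forall>t' < t. \<forall>d'. \<not> (act t' = Some p \<and> inp t' = Resp j c d'))) \<and>
        (\<forall>j < length Os. \<forall>c.
            card (procs (Os ! j)) \<le>
              card {p \<in> procs (Os ! j). \<exists>v. queried A st act inp (procs (Os ! j)) j c p v}
              + res (Os ! j) \<and>
            (\<exists>d. valid_resp A st act inp (Os ! j) F j c d) \<longrightarrow>
            (\<forall>p \<in> \<Pi> - Faulty F. (\<exists>v. queried A st act inp (procs (Os ! j)) j c p v) \<longrightarrow>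
               (\<exists>t. act t = Some p \<and> inp t = Resp j c (dd j c)))))"

definition solves :: "('s,'m) algo \<Rightarrow> task list \<Rightarrow> task \<Rightarrow> bool" where
  "solves A Os T \<longleftrightarrow>
     (\<forall>F V st act inp.
        failure_pattern (procs T) F \<and> card (Faulty F) \<le> res T \<and>
        (\<forall>p \<in> procs T. V p \<in> {0, 1}) \<and>
        is_run A (procs T) Os F V st act inp \<longrightarrow>
          (\<forall>p \<in> procs T - Faulty F. \<exists>t. adec A (st t p) \<noteq> None) \<and>
          (\<forall>p \<in> procs T. \<forall>t d. adec A (st t p) = Some d \<longrightarrow>
               (\<forall>t' \<ge> t. adec A (st t' p) = Some d)) \<and>
          (\<forall>p \<in> procs T. \<forall>q \<in> procs T. \<forall>t t' d d'.
               adec A (st t p) = Some d \<and> adec A (st t' q) = Some d' \<longrightarrow> d = d') \<and>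
          (\<forall>p \<in> procs T. \<forall>t d. adec A (st t p) = Some d \<longrightarrow> d \<in> prob T F V))"

text \<open>\<open>C\<^sup>*\<close>-reduction. Local states and messages are taken in the (countable) type
  \<open>nat list\<close>, which loses no generality for deterministic algorithms.\<close>
definition C_star_red :: "task \<Rightarrow> task \<Rightarrow> bool" where
  "C_star_red T1 T2 \<longleftrightarrow>
     (\<exists>(\<rho>s :: (proc \<Rightarrow> proc) list) (A :: (nat list, nat list) algo).
        (\<forall>\<rho> \<in> set \<rho>s. inj_on \<rho> (procs T2) \<and> \<rho> ` procs T2 \<subseteq> procs T1) \<and>
        solves A (map (renamed_copy T2) \<rho>s) T1)"

end

theory Submission
  imports Defs
begin

(*
  Oracle j (for j = 0, ..., n) is the copy of k-TAg(n,f) on the processes other than j + 1,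
  and every process consults it with its true input. Since at most f \<le> n - 1 processes crash,
  every consultant that never queries is faulty, so each oracle has a legal response and must
  deliver it; moreover at least two processes are correct, so the one process excluded from
  oracle j learns its response from the broadcast of another correct process. Each process
  decides the minimum of the n + 1 responses. If at least k inputs are 0, the oracle that
  excludes a process with input 1 (or any oracle, if all inputs are 0, since n \<ge> k) sees k
  zeros and must answer 0. If all inputs are 1 and at most k - 1 processes crash, every oracle
  sees the same and must answer 1.
*)

section \<open>Binary k-threshold agreement on subsystems\<close>

lemma Faulty_restrict: "Faulty (\<lambda>t. F t \<inter> C) = Faulty F \<inter> C"
  by (auto simp: Faulty_def)

lemma prob_renamed_copy_kTAg:
  assumes "inj_on \<rho> A"
  shows "prob (renamed_copy (kTAg A k f) \<rho>) G W = ktag_prob (\<rho> ` A) k (\<lambda>t. G t \<inter> \<rho> ` A) W"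
proof -
  have card_preimage: "card {p \<in> A. P (\<rho> p)} = card {q \<in> \<rho> ` A. P q}" for P
  proof -
    have "{q \<in> \<rho> ` A. P q} = \<rho> ` {p \<in> A. P (\<rho> p)}" by auto
    then show ?thesis by (simp add: card_image inj_on_subset[OF assms])
  qed
  have "Faulty (\<lambda>t. {p \<in> A. \<rho> p \<in> G t}) = {p \<in> A. \<rho> p \<in> Faulty G}"
    by (auto simp: Faulty_def)
  moreover have "{q \<in> \<rho> ` A. q \<in> Faulty G} = Faulty (\<lambda>t. G t \<inter> \<rho> ` A)"
    by (auto simp: Faulty_def)
  ultimately show ?thesis
    by (simp add: renamed_copy_def kTAg_def ktag_prob_def card_preimage[of "\<lambda>q. q \<in> Faulty G"]
        card_preimage[of "\<lambda>q. W q = 0"])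
qed

lemma ktag_prob_common_answer_exists:
  assumes "finite C" and "1 \<le> k" and "C - Q \<subseteq> Faulty F"
  shows "\<exists>d. \<forall>V'. (\<forall>p\<in>C. V' p \<in> {0, 1}) \<and> (\<forall>p\<in>Q. V' p = V p)
                \<longrightarrow> d \<in> ktag_prob C k (\<lambda>t. F t \<inter> C) V'"
proof -
  let ?faulty = "card (Faulty F \<inter> C) \<le> k - 1"
  define d where "d = (if (\<forall>q\<in>Q \<inter> C. V q = 1) \<and> ?faulty then 1 else 0 :: nat)"
  have "d \<in> ktag_prob C k (\<lambda>t. F t \<inter> C) V'"
    if binary: "\<forall>p\<in>C. V' p \<in> {0, 1}" and extends: "\<forall>p\<in>Q. V' p = V p" for V'
  proof (cases "(\<forall>q\<in>Q \<inter> C. V q = 1) \<and> ?faulty")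
    case True
    \<comment> \<open>every zero of \<open>V'\<close> lies outside the queriers, hence is faulty\<close>
    then have "{p \<in> C. V' p = 0} \<subseteq> Faulty F \<inter> C"
      using extends assms(3) by fastforce
    then have "card {p \<in> C. V' p = 0} \<le> k - 1"
      using True card_mono[OF finite_Int[OF disjI2[OF \<open>finite C\<close>]]] le_trans by blast
    then have "\<not> k \<le> card {p \<in> C. V' p = 0}"
      using \<open>1 \<le> k\<close> by linarith
    then show ?thesis
      using True \<open>1 \<le> k\<close> by (simp add: ktag_prob_def d_def Faulty_restrict)
  next
    case False
    have "\<not> ((\<forall>p\<in>C. V' p = 1) \<and> ?faulty)"
      using False extends by auto
    then have "0 \<in> ktag_prob C k (\<lambda>t. F t \<inter> C) V'"
      by (auto simp: ktag_prob_def Faulty_restrict)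
    moreover have "d = 0"
      using False by (auto simp: d_def)
    ultimately show ?thesis
      by simp
  qed
  then show ?thesis by blast
qed

lemma ktag_prob_min_over_subsystems:
  assumes "finite \<Pi>" and "k < card \<Pi>" and "finite (Faulty F)"
    and answers: "\<And>q. q \<in> \<Pi> \<Longrightarrow> w q \<in> ktag_prob (\<Pi> - {q}) k (\<lambda>t. F t \<inter> (\<Pi> - {q})) V"
  shows "(if \<exists>q\<in>\<Pi>. w q = 0 then 0 else 1) \<in> ktag_prob \<Pi> k F V"
proof (cases "k \<le> card {p \<in> \<Pi>. V p = 0}")
  case True
  \<comment> \<open>delete a process with non-zero input, or any process if all inputs are zero\<close>
  obtain q where q: "q \<in> \<Pi>" and zeros: "k \<le> card {p \<in> \<Pi> - {q}. V p = 0}"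
  proof (cases "\<exists>q\<in>\<Pi>. V q \<noteq> 0")
    case True
    then obtain q where "q \<in> \<Pi>" "V q \<noteq> 0"
      by blast
    moreover have "{p \<in> \<Pi> - {q}. V p = 0} = {p \<in> \<Pi>. V p = 0}"
      using \<open>V q \<noteq> 0\<close> by auto
    ultimately show ?thesis
      using \<open>k \<le> card {p \<in> \<Pi>. V p = 0}\<close> that by metis
  next
    case False
    obtain q where "q \<in> \<Pi>"
      using assms(2) by fastforce
    moreover have "{p \<in> \<Pi> - {q}. V p = 0} = \<Pi> - {q}"
      using False by auto
    moreover have "k \<le> card (\<Pi> - {q})"
      using assms(2) \<open>q \<in> \<Pi>\<close> by simp
    ultimately show ?thesis
      by (metis that)
  qed
  then have "w q = 0"
    using answers[OF q] by (simp add: ktag_prob_def)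
  then show ?thesis
    using q True by (auto simp: ktag_prob_def)
next
  case no_zeros: False
  show ?thesis
  proof (cases "(\<forall>p\<in>\<Pi>. V p = 1) \<and> card (Faulty F) \<le> k - 1")
    case True
    have "w q = 1" if q: "q \<in> \<Pi>" for q
    proof -
      have "{p \<in> \<Pi> - {q}. V p = 0} = {}"
        using True by auto
      moreover have "0 < k"
        using no_zeros by linarith
      ultimately have "\<not> k \<le> card {p \<in> \<Pi> - {q}. V p = 0}"
        by (metis card.empty not_le)
      moreover have "card (Faulty F \<inter> (\<Pi> - {q})) \<le> k - 1"
        using True card_mono[OF assms(3), of "Faulty F \<inter> (\<Pi> - {q})"] by auto
      ultimately show ?thesis
        using answers[OF q] True by (simp add: ktag_prob_def Faulty_restrict)
    qed
    then show ?thesis using True no_zeros by (auto simp: ktag_prob_def)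
  next
    case False
    then show ?thesis using no_zeros by (simp add: ktag_prob_def)
  qed
qed

section \<open>The algorithm\<close>

text \<open>A local state is the input followed by one slot per oracle: slot \<open>Suc j\<close> holds 0 while
  the response of oracle \<open>j\<close> is unknown and \<open>Suc d\<close> once it is known to be \<open>d\<close>.\<close>

definition answer :: "nat list \<Rightarrow> nat \<Rightarrow> nat option" where
  "answer s j = (case s ! Suc j of 0 \<Rightarrow> None | Suc d \<Rightarrow> Some d)"

definition learn :: "nat list \<Rightarrow> nat \<Rightarrow> nat \<Rightarrow> nat list" where
  "learn s j d = (if answer s j = None then s[Suc j := Suc d] else s)"

lemma length_learn [simp]: "length (learn s j d) = length s"
  by (simp add: learn_def)

lemma hd_learn [simp]: "s \<noteq> [] \<Longrightarrow> hd (learn s j d) = hd s"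
  by (cases s) (simp_all add: learn_def)

lemma answer_learn_known: "answer s j \<noteq> None \<Longrightarrow> answer (learn s j' d) j = answer s j"
  by (cases "j = j'") (auto simp: learn_def answer_def)

lemma answer_learn_same: "Suc j < length s \<Longrightarrow> answer (learn s j d) j \<noteq> None"
  by (auto simp: learn_def answer_def)

lemma answer_learn_cases:
  "answer (learn s j' d) j = Some e \<Longrightarrow> answer s j = Some e \<or> (j = j' \<and> e = d)"
  by (cases "j = j'"; cases "Suc j < length s")
    (auto simp: learn_def answer_def list_update_beyond split: if_splits)

fun tag_react :: "nat \<Rightarrow> nat list \<Rightarrow> nat list input \<Rightarrow> nat list \<times> (proc \<times> nat list) list" where
  "tag_react n s Null = (s, [])"
| "tag_react n s (Recv q m) = (learn s (m ! 0) (m ! 1), [])"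
| "tag_react n s (Resp j c d) =
     (if c = 0 then (learn s j d, map (\<lambda>q. (q, [j, d])) [1..<n + 2]) else (s, []))"

lemma length_tag_react [simp]: "length (fst (tag_react n s i)) = length s"
  by (cases i) auto

lemma hd_tag_react [simp]: "s \<noteq> [] \<Longrightarrow> hd (fst (tag_react n s i)) = hd s"
  by (cases i) auto

lemma answer_tag_react_known:
  "answer s j \<noteq> None \<Longrightarrow> answer (fst (tag_react n s i)) j = answer s j"
  by (cases i) (auto simp: answer_learn_known)

definition tag_decision :: "nat \<Rightarrow> nat list \<Rightarrow> nat option" where
  "tag_decision n s =
     (if \<forall>j\<le>n. answer s j \<noteq> None
      then Some (if \<exists>j\<le>n. answer s j = Some 0 then 0 else 1) else None)"

lemma tag_decision_cong:
  assumes "\<And>j. j \<le> n \<Longrightarrow> answer s j = answer s' j"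
  shows "tag_decision n s = tag_decision n s'"
proof -
  have "(\<forall>j\<le>n. answer s j \<noteq> None) \<longleftrightarrow> (\<forall>j\<le>n. answer s' j \<noteq> None)"
    and "(\<exists>j\<le>n. answer s j = Some 0) \<longleftrightarrow> (\<exists>j\<le>n. answer s' j = Some 0)"
    using assms by auto
  then show ?thesis
    unfolding tag_decision_def by (simp only:)
qed

text \<open>Every step queries every oracle with the input, so every query of a process is its input;
  only the response to consultation 0 is used.\<close>

definition tag_algo :: "nat \<Rightarrow> (nat list, nat list) algo" where
  "tag_algo n =
     \<lparr>ainit = (\<lambda>p v. v # replicate (Suc n) 0),
      atrans = (\<lambda>p s i. (fst (tag_react n s i), snd (tag_react n s i),
                         map (\<lambda>j. (j, hd s)) [0..<Suc n])),
      adec = tag_decision n\<rparr>"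

definition skip :: "nat \<Rightarrow> proc \<Rightarrow> proc" where
  "skip j p = (if p \<le> j then p else Suc p)"

lemma inj_on_skip: "inj_on (skip j) A"
  by (auto simp: inj_on_def skip_def)

lemma skip_image: "j \<le> n \<Longrightarrow> skip j ` {1..n} = {1..Suc n} - {Suc j}"
proof (intro equalityI subsetI)
  fix q assume "j \<le> n" "q \<in> {1..Suc n} - {Suc j}"
  then have "q = skip j (if q \<le> j then q else q - 1)" "(if q \<le> j then q else q - 1) \<in> {1..n}"
    by (auto simp: skip_def)
  then show "q \<in> skip j ` {1..n}" by blast
qed (auto simp: skip_def)

text \<open>Oracle \<open>j\<close> is the paper's \<open>O.k-TAg(\<Pi>\<^sub>j\<^sub>+\<^sub>1, f)\<close>, where \<open>\<Pi>\<^sub>l = {1..n+1} - {l}\<close>.\<close>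

definition tag_oracles :: "nat \<Rightarrow> nat \<Rightarrow> nat \<Rightarrow> task list" where
  "tag_oracles n k f = map (renamed_copy (kTAg_n n k f)) (map skip [0..<Suc n])"

lemma length_tag_oracles [simp]: "length (tag_oracles n k f) = Suc n"
  by (simp add: tag_oracles_def)

lemma tag_oracle:
  assumes "j \<le> n"
  shows "procs (tag_oracles n k f ! j) = {1..Suc n} - {Suc j}"
    and "res (tag_oracles n k f ! j) = f"
    and "prob (tag_oracles n k f ! j) G W =
           ktag_prob ({1..Suc n} - {Suc j}) k (\<lambda>t. G t \<inter> ({1..Suc n} - {Suc j})) W"
proof -
  have copy: "tag_oracles n k f ! j = renamed_copy (kTAg {1..n} k f) (skip j)"
    using assms by (simp add: tag_oracles_def kTAg_n_def del: upt_Suc)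
  show "procs (tag_oracles n k f ! j) = {1..Suc n} - {Suc j}"
    using skip_image[OF assms] by (simp add: copy renamed_copy_def kTAg_def)
  show "res (tag_oracles n k f ! j) = f"
    unfolding copy renamed_copy_def kTAg_def by simp
  show "prob (tag_oracles n k f ! j) G W =
           ktag_prob ({1..Suc n} - {Suc j}) k (\<lambda>t. G t \<inter> ({1..Suc n} - {Suc j})) W"
    unfolding copy prob_renamed_copy_kTAg[OF inj_on_skip] skip_image[OF assms] ..
qed

section \<open>Runs of the algorithm\<close>

text \<open>The conjuncts of \<open>is_run\<close> except injectivity of \<open>\<mu>\<close>, with its witnesses fixed:
  \<open>\<mu>\<close> matches receipts to sends and \<open>dd j c\<close> is the common response of oracle \<open>j\<close> to
  consultation \<open>c\<close>.\<close>

locale tag_run =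
  fixes n k f :: nat and F :: fpat and V :: "proc \<Rightarrow> nat"
    and st :: "nat \<Rightarrow> proc \<Rightarrow> nat list" and act :: "nat \<Rightarrow> proc option"
    and inp :: "nat \<Rightarrow> nat list input"
    and \<mu> :: "nat \<Rightarrow> nat \<times> nat" and dd :: "nat \<Rightarrow> nat \<Rightarrow> nat"
  assumes k_pos: "1 \<le> k" and k_le: "k \<le> n" and f_le: "f \<le> n - 1"
    and faulty_procs: "Faulty F \<subseteq> {1..Suc n}" and card_faulty: "card (Faulty F) \<le> f"
    and binary_inputs: "\<forall>p\<in>{1..Suc n}. V p \<in> {0, 1}"
    and initial: "\<forall>p. st 0 p = ainit (tag_algo n) p (V p)"
    and steps: "\<forall>t. case act t of
          None \<Rightarrow> st (Suc t) = st t
        | Some p \<Rightarrow> p \<in> {1..Suc n} \<and> p \<notin> F t \<and>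
            st (Suc t) = (st t)(p := fst (atrans (tag_algo n) p (st t p) (inp t)))"
    and fair: "\<forall>p \<in> {1..Suc n} - Faulty F. \<forall>t. \<exists>t' \<ge> t. act t' = Some p"
    and received_was_sent: "\<forall>t q p m. act t = Some q \<and> inp t = Recv p m \<longrightarrow>
          fst (\<mu> t) < t \<and> act (fst (\<mu> t)) = Some p \<and>
          snd (\<mu> t) < length (sends (tag_algo n) st act inp (fst (\<mu> t))) \<and>
          sends (tag_algo n) st act inp (fst (\<mu> t)) ! snd (\<mu> t) = (q, m)"
    and sent_is_received: "\<forall>t' i. i < length (sends (tag_algo n) st act inp t') \<and>
          fst (sends (tag_algo n) st act inp t' ! i) \<in> {1..Suc n} - Faulty F \<longrightarrow>
          (\<exists>t \<in> recv_events act inp. \<mu> t = (t', i))"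
    and response_common: "\<forall>t p j c d. act t = Some p \<and> inp t = Resp j c d \<longrightarrow>
          j < length (tag_oracles n k f) \<and> p \<in> procs (tag_oracles n k f ! j) \<and>
          c < length (qlist (tag_algo n) st act inp j p t) \<and>
          d = dd j c \<and> valid_resp (tag_algo n) st act inp (tag_oracles n k f ! j) F j c d \<and>
          (\<forall>t' < t. \<forall>d'. \<not> (act t' = Some p \<and> inp t' = Resp j c d'))"
    and response_live: "\<forall>j < length (tag_oracles n k f). \<forall>c.
          card (procs (tag_oracles n k f ! j)) \<le>
            card {p \<in> procs (tag_oracles n k f ! j).
                  \<exists>v. queried (tag_algo n) st act inp (procs (tag_oracles n k f ! j)) j c p v}
            + res (tag_oracles n k f ! j) \<and>
          (\<exists>d. valid_resp (tag_algo n) st act inp (tag_oracles n k f ! j) F j c d) \<longrightarrow>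
          (\<forall>p \<in> {1..Suc n} - Faulty F.
             (\<exists>v. queried (tag_algo n) st act inp (procs (tag_oracles n k f ! j)) j c p v) \<longrightarrow>
             (\<exists>t. act t = Some p \<and> inp t = Resp j c (dd j c)))"

lemma tag_run_if_is_run:
  assumes "1 \<le> k" "k \<le> n" "f \<le> n - 1" "failure_pattern {1..Suc n} F" "card (Faulty F) \<le> f"
    "\<forall>p\<in>{1..Suc n}. V p \<in> {0, 1}"
    and run: "is_run (tag_algo n) {1..Suc n} (tag_oracles n k f) F V st act inp"
  shows "\<exists>\<mu> dd. tag_run n k f F V st act inp \<mu> dd"
proof -
  have "Faulty F \<subseteq> {1..Suc n}"
    using assms(4) by (auto simp: failure_pattern_def Faulty_def)
  with run show ?thesis
    unfolding is_run_def
    by (elim conjE exE, intro exI tag_run.intro) (assumption | rule assms)+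
qed

context tag_run
begin

abbreviation consultants :: "nat \<Rightarrow> proc set" where
  "consultants j \<equiv> {1..Suc n} - {Suc j}"

abbreviation correct :: "proc set" where
  "correct \<equiv> {1..Suc n} - Faulty F"

abbreviation legal :: "nat \<Rightarrow> nat \<Rightarrow> bool" where
  "legal j d \<equiv> valid_resp (tag_algo n) st act inp (tag_oracles n k f ! j) F j 0 d"

lemma step_state:
  "st (Suc t) p = (if act t = Some p then fst (tag_react n (st t p) (inp t)) else st t p)"
  using spec[OF steps, of t] by (auto simp: tag_algo_def split: option.splits)

lemma state_shape: "length (st t p) = n + 2 \<and> hd (st t p) = V p"
proof (induction t)
  case 0
  then show ?case using initial by (simp add: tag_algo_def)
next
  case (Suc t)
  then have "st t p \<noteq> []" by auto
  with Suc show ?case by (simp add: step_state)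
qed

lemma sends_tag_algo:
  "sends (tag_algo n) st act inp t =
     (case act t of None \<Rightarrow> [] | Some p \<Rightarrow> snd (tag_react n (st t p) (inp t)))"
  by (simp add: sends_def step_out_def tag_algo_def split: option.splits)

lemma qlist_tag_algo:
  "qlist (tag_algo n) st act inp j p t =
     concat (map (\<lambda>t'. if act t' = Some p \<and> j \<le> n then [V p] else []) [0..<t])"
proof -
  have queries_to_j: "map snd (filter (\<lambda>q. fst q = j) (map (\<lambda>i. (i, x)) [0..<Suc n])) =
          (if j \<le> n then [x] else [])" for x
    by (induction n) auto
  show ?thesis
    unfolding qlist_def queries_def step_out_def
    by (intro arg_cong[where f = concat] map_cong)
      (auto simp: tag_algo_def state_shape queries_to_j simp del: upt_Suc)
qed

lemma queried_value: "queried (tag_algo n) st act inp C j c p v \<Longrightarrow> v = V p"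
proof -
  have "set (qlist (tag_algo n) st act inp j p t) \<subseteq> {V p}" for t
    by (auto simp: qlist_tag_algo split: if_splits)
  then show "queried (tag_algo n) st act inp C j c p v \<Longrightarrow> v = V p"
    unfolding queried_def using nth_mem by blast
qed

lemma queried_after_step:
  assumes "act t = Some p" and "p \<in> C" and "j \<le> n"
  shows "queried (tag_algo n) st act inp C j 0 p (V p)"
proof -
  have "qlist (tag_algo n) st act inp j p (Suc t) \<noteq> []"
    using assms by (auto simp: qlist_tag_algo)
  moreover have "set (qlist (tag_algo n) st act inp j p (Suc t)) \<subseteq> {V p}"
    by (auto simp: qlist_tag_algo split: if_splits)
  ultimately show ?thesis
    using \<open>p \<in> C\<close> unfolding queried_def
    by (metis length_greater_0_conv nth_mem singletonD subsetD)
qed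

lemma finite_faulty: "finite (Faulty F)"
  using faulty_procs finite_subset by blast

lemma correct_consultant_queried:
  assumes "j \<le> n" and "p \<in> consultants j - Faulty F"
  shows "queried (tag_algo n) st act inp (consultants j) j 0 p (V p)"
proof -
  have "p \<in> correct"
    using assms(2) by auto
  then obtain t where "act t = Some p"
    using fair by blast
  then show ?thesis
    using assms by (intro queried_after_step) auto
qed

lemma response_valid:
  assumes "act t = Some p" and "inp t = Resp j c d"
  shows "j \<le> n \<and> d = dd j c \<and> valid_resp (tag_algo n) st act inp (tag_oracles n k f ! j) F j c d"
proof -
  have "j < length (tag_oracles n k f) \<and> d = dd j c \<and>
      valid_resp (tag_algo n) st act inp (tag_oracles n k f ! j) F j c d"
    using response_common assms by blast
  then show ?thesis
    by auto
qed

lemma legal_response_in_ktag_prob: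
  assumes "j \<le> n" and "legal j d"
  shows "d \<in> ktag_prob (consultants j) k (\<lambda>t. F t \<inter> consultants j) V"
proof -
  have "\<forall>p\<in>consultants j. V p \<in> {0, 1}"
    using binary_inputs by auto
  moreover have "\<forall>p v. queried (tag_algo n) st act inp (consultants j) j 0 p v \<longrightarrow> V p = v"
    using queried_value by metis
  ultimately show ?thesis
    using assms by (simp add: valid_resp_def tag_oracle Int_absorb2)
qed

lemma legal_exists:
  assumes "j \<le> n"
  shows "\<exists>d. legal j d"
proof -
  let ?Q = "{p. \<exists>v. queried (tag_algo n) st act inp (consultants j) j 0 p v}"
  have "consultants j - ?Q \<subseteq> Faulty F"
  proof
    fix p
    assume "p \<in> consultants j - ?Q"
    then show "p \<in> Faulty F"
      using correct_consultant_queried[OF assms, of p] by auto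
  qed
  from ktag_prob_common_answer_exists[OF _ k_pos this]
  obtain d where d: "\<forall>V'. (\<forall>p\<in>consultants j. V' p \<in> {0, 1}) \<and> (\<forall>p\<in>?Q. V' p = V p)
      \<longrightarrow> d \<in> ktag_prob (consultants j) k (\<lambda>t. F t \<inter> consultants j) V'"
    by blast
  have "legal j d"
    unfolding valid_resp_def tag_oracle(1)[OF assms]
  proof (intro allI impI)
    fix V'
    assume V': "(\<forall>p\<in>consultants j. V' p \<in> {0, 1}) \<and>
      (\<forall>p v. queried (tag_algo n) st act inp (consultants j) j 0 p v \<longrightarrow> V' p = v)"
    then have "\<forall>p\<in>?Q. V' p = V p"
      using queried_value by blast
    with V' d have "d \<in> ktag_prob (consultants j) k (\<lambda>t. F t \<inter> consultants j) V'"
      by blast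
    then show "d \<in> prob (tag_oracles n k f ! j) (\<lambda>t. F t \<inter> consultants j) V'"
      by (simp add: tag_oracle(3)[OF assms] Int_assoc)
  qed
  then show ?thesis ..
qed

lemma consultant_gets_response:
  assumes "j \<le> n" and "p \<in> correct" and "p \<noteq> Suc j"
  shows "\<exists>t. act t = Some p \<and> inp t = Resp j 0 (dd j 0)"
proof -
  let ?Q = "{p \<in> consultants j. \<exists>v. queried (tag_algo n) st act inp (consultants j) j 0 p v}"
  have "consultants j - Faulty F \<subseteq> ?Q"
    using correct_consultant_queried[OF assms(1)] by blast
  then have "card (consultants j - Faulty F) \<le> card ?Q"
    by (intro card_mono) auto
  moreover have "card (consultants j) - card (Faulty F) \<le> card (consultants j - Faulty F)"
    using diff_card_le_card_Diff[OF finite_faulty] .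
  ultimately have "card (consultants j) \<le> card ?Q + f"
    using card_faulty by linarith
  moreover have "\<exists>v. queried (tag_algo n) st act inp (consultants j) j 0 p v"
    using correct_consultant_queried assms by blast
  ultimately show ?thesis
    using response_live[rule_format, of j 0 p] legal_exists[OF assms(1)] assms
    by (simp add: tag_oracle)
qed

lemma sends_after_response:
  assumes "act t = Some q" and "inp t = Resp j 0 d"
  shows "sends (tag_algo n) st act inp t = map (\<lambda>p. (p, [j, d])) [1..<n + 2]"
  using assms by (simp add: sends_tag_algo del: upt_Suc)

lemma received_message:
  assumes "act t = Some p" and "inp t = Recv r m"
  shows "\<exists>j. j \<le> n \<and> m = [j, dd j 0] \<and> legal j (dd j 0)"
proof -
  let ?t0 = "fst (\<mu> t)" and ?i = "snd (\<mu> t)"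
  have sent: "act ?t0 = Some r" "?i < length (sends (tag_algo n) st act inp ?t0)"
    "sends (tag_algo n) st act inp ?t0 ! ?i = (p, m)"
    using received_was_sent assms by blast+
  then have "snd (tag_react n (st ?t0 r) (inp ?t0)) \<noteq> []"
    by (auto simp: sends_tag_algo)
  then obtain j d where resp: "inp ?t0 = Resp j 0 d"
    by (cases "inp ?t0") (auto split: if_splits)
  then have "m = [j, d]"
    using sent sends_after_response[of ?t0 r j d] by (auto simp del: upt_Suc)
  then show ?thesis
    using response_valid[OF sent(1) resp] by blast
qed

lemma message_delivered:
  assumes "i < length (sends (tag_algo n) st act inp t)"
    and "sends (tag_algo n) st act inp t ! i = (p, m)" and "p \<in> correct"
  shows "\<exists>t' r. act t' = Some p \<and> inp t' = Recv r m"
proof -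
  obtain t' where t': "t' \<in> recv_events act inp" "\<mu> t' = (t, i)"
    using sent_is_received assms by fastforce
  then obtain q r m' where recv: "act t' = Some q" "inp t' = Recv r m'"
    unfolding recv_events_def by blast
  then have "sends (tag_algo n) st act inp t ! i = (q, m')"
    using received_was_sent t'(2) by (metis fst_conv snd_conv)
  then show ?thesis
    using assms(2) recv by auto
qed

lemma step_learns_legal:
  "st (Suc t) p = st t p \<or>
   (\<exists>j. j \<le> n \<and> legal j (dd j 0) \<and> st (Suc t) p = learn (st t p) j (dd j 0))"
proof (cases "act t = Some p")
  case True
  show ?thesis
  proof (cases "inp t")
    case (Recv r m)
    then show ?thesis
      using received_message[OF True Recv] True by (auto simp: step_state)
  next
    case (Resp j c d)
    then show ?thesis
      using response_valid[OF True Resp] True by (auto simp: step_state)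
  qed (simp add: step_state)
qed (simp add: step_state)

lemma answer_sound:
  assumes "j \<le> n" and "answer (st t p) j = Some d"
  shows "d = dd j 0 \<and> legal j d"
  using assms(2)
proof (induction t)
  case 0
  have "answer (st 0 p) j = None"
    using initial assms(1) by (simp add: tag_algo_def answer_def del: replicate_Suc)
  with 0 show ?case by simp
next
  case (Suc t)
  from step_learns_legal[of t p] show ?case
  proof
    assume "st (Suc t) p = st t p"
    with Suc.prems have "answer (st t p) j = Some d"
      by simp
    then show ?case
      by (rule Suc.IH)
  next
    assume "\<exists>j'. j' \<le> n \<and> legal j' (dd j' 0) \<and> st (Suc t) p = learn (st t p) j' (dd j' 0)"
    then obtain j' where j': "legal j' (dd j' 0)" "st (Suc t) p = learn (st t p) j' (dd j' 0)"
      by blast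
    then have "answer (st t p) j = Some d \<or> (j = j' \<and> d = dd j' 0)"
      using Suc.prems answer_learn_cases by metis
    then show ?case
      using Suc.IH j'(1) by auto
  qed
qed

lemma answer_stable:
  assumes "answer (st t p) j = Some d" and "t \<le> t'"
  shows "answer (st t' p) j = Some d"
  using assms(2)
proof (induction t' rule: dec_induct)
  case base
  then show ?case using assms(1) .
next
  case (step t')
  then show ?case by (simp add: step_state answer_tag_react_known)
qed

lemma two_correct: "\<exists>q \<in> correct. q \<noteq> p"
proof -
  have "Suc n - f \<le> card correct"
    using diff_card_le_card_Diff[OF finite_faulty, of "{1..Suc n}"] card_faulty by simp
  then have "2 \<le> card correct"
    using f_le k_le k_pos by linarith
  then obtain a b where "a \<in> correct" "b \<in> correct" "a \<noteq> b"
    using card_le_Suc0_iff_eq[of correct] by fastforce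
  then show ?thesis
    by metis
qed

lemma answer_eventually:
  assumes "j \<le> n" and "p \<in> correct"
  shows "\<exists>t. answer (st t p) j \<noteq> None"
proof -
  have learned: "answer (st (Suc t) p) j \<noteq> None"
    if "act t = Some p" and "inp t = Resp j 0 d \<or> (\<exists>r. inp t = Recv r [j, d])" for t d
  proof -
    have "st (Suc t) p = learn (st t p) j d"
      using that by (auto simp: step_state)
    moreover have "Suc j < length (st t p)"
      using assms(1) state_shape[of t p] by simp
    ultimately show ?thesis
      using answer_learn_same by metis
  qed
  show ?thesis
  proof (cases "p = Suc j")
    case False
    then obtain t where "act t = Some p" "inp t = Resp j 0 (dd j 0)"
      using consultant_gets_response[OF assms] by blast
    then show ?thesis
      using learned by blast
  next
    case True
    \<comment> \<open>\<open>p\<close> does not consult oracle \<open>j\<close>; it learns the answer from another correct process\<close>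
    obtain q where "q \<in> correct" "q \<noteq> Suc j"
      using two_correct by blast
    then obtain t where t: "act t = Some q" "inp t = Resp j 0 (dd j 0)"
      using consultant_gets_response assms(1) by blast
    have "j < length (sends (tag_algo n) st act inp t)"
      "sends (tag_algo n) st act inp t ! j = (p, [j, dd j 0])"
      using sends_after_response[OF t] assms(1) True by (simp_all del: upt_Suc)
    then show ?thesis
      using message_delivered assms(2) learned by blast
  qed
qed

lemma answers_eventually:
  assumes "p \<in> correct"
  shows "\<exists>t. \<forall>j\<le>n. answer (st t p) j \<noteq> None"
proof -
  have "\<forall>j\<in>{..n}. \<exists>t. answer (st t p) j \<noteq> None"
    using answer_eventually[OF _ assms] by simp
  then obtain T where T: "\<forall>j\<in>{..n}. answer (st (T j) p) j \<noteq> None"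
    by (rule bchoice[THEN exE])
  have "answer (st (Max (T ` {..n})) p) j \<noteq> None" if j: "j \<le> n" for j
  proof -
    obtain d where "answer (st (T j) p) j = Some d"
      using T j by auto
    moreover have "T j \<le> Max (T ` {..n})"
      using j by simp
    ultimately show ?thesis
      using answer_stable by (metis option.distinct(1))
  qed
  then show ?thesis by blast
qed

lemma legal_responses:
  assumes "j \<le> n"
  shows "legal j (dd j 0)"
proof -
  obtain p where "p \<in> correct"
    using two_correct by blast
  then obtain t d where "answer (st t p) j = Some d"
    using answer_eventually[OF assms] by blast
  then show ?thesis
    using answer_sound[OF assms] by blast
qed

lemma decision_value:
  assumes "tag_decision n (st t p) = Some d"
  shows "d = (if \<exists>j\<le>n. dd j 0 = 0 then 0 else 1)"
proof -
  have "answer (st t p) j = Some (dd j 0)" if j: "j \<le> n" for j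
  proof -
    obtain e where e: "answer (st t p) j = Some e"
      using assms j unfolding tag_decision_def by (metis not_Some_eq option.distinct(1))
    then have "e = dd j 0"
      using answer_sound[OF j] by blast
    with e show ?thesis by simp
  qed
  then show ?thesis
    using assms by (auto simp: tag_decision_def split: if_splits)
qed

lemma decision_legal: "(if \<exists>j\<le>n. dd j 0 = 0 then 0 else 1) \<in> ktag_prob {1..Suc n} k F V"
proof -
  have "(if \<exists>q\<in>{1..Suc n}. dd (q - 1) 0 = 0 then 0 else 1) \<in> ktag_prob {1..Suc n} k F V"
  proof (rule ktag_prob_min_over_subsystems)
    show "k < card {1..Suc n}"
      using k_le by simp
    show "dd (q - 1) 0 \<in> ktag_prob ({1..Suc n} - {q}) k (\<lambda>t. F t \<inter> ({1..Suc n} - {q})) V"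
      if q: "q \<in> {1..Suc n}" for q
    proof -
      have "q - 1 \<le> n" "Suc (q - 1) = q"
        using q by auto
      then show ?thesis
        using legal_response_in_ktag_prob[OF _ legal_responses, of "q - 1"] by simp
    qed
  qed (simp_all add: finite_faulty)
  moreover have "(\<exists>q\<in>{1..Suc n}. dd (q - 1) 0 = 0) \<longleftrightarrow> (\<exists>j\<le>n. dd j 0 = 0)"
  proof
    assume "\<exists>j\<le>n. dd j 0 = 0"
    then obtain j where "j \<le> n" "dd j 0 = 0"
      by blast
    then show "\<exists>q\<in>{1..Suc n}. dd (q - 1) 0 = 0"
      by (intro bexI[of _ "Suc j"]) auto
  next
    assume "\<exists>q\<in>{1..Suc n}. dd (q - 1) 0 = 0"
    then obtain q where "q \<in> {1..Suc n}" "dd (q - 1) 0 = 0"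
      by blast
    then show "\<exists>j\<le>n. dd j 0 = 0"
      by (intro exI[of _ "q - 1"]) auto
  qed
  ultimately show ?thesis by simp
qed

lemma decision_stable:
  assumes "tag_decision n (st t p) = Some d" and "t \<le> t'"
  shows "tag_decision n (st t' p) = Some d"
proof -
  have "answer (st t' p) j = answer (st t p) j" if j: "j \<le> n" for j
  proof -
    obtain e where "answer (st t p) j = Some e"
      using assms(1) j unfolding tag_decision_def by (metis not_Some_eq option.distinct(1))
    then show ?thesis
      using answer_stable[OF _ assms(2)] by simp
  qed
  then show ?thesis
    using assms(1) tag_decision_cong by metis
qed

lemma correct_decides:
  assumes "p \<in> correct"
  shows "\<exists>t. tag_decision n (st t p) \<noteq> None"
proof -
  obtain t where "\<forall>j\<le>n. answer (st t p) j \<noteq> None"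
    using answers_eventually[OF assms] by blast
  then have "tag_decision n (st t p) \<noteq> None"
    by (simp add: tag_decision_def)
  then show ?thesis ..
qed

lemma run_correct:
  "(\<forall>p \<in> {1..Suc n} - Faulty F. \<exists>t. tag_decision n (st t p) \<noteq> None) \<and>
   (\<forall>p \<in> {1..Suc n}. \<forall>t d. tag_decision n (st t p) = Some d \<longrightarrow>
      (\<forall>t' \<ge> t. tag_decision n (st t' p) = Some d)) \<and>
   (\<forall>p \<in> {1..Suc n}. \<forall>q \<in> {1..Suc n}. \<forall>t t' d d'.
      tag_decision n (st t p) = Some d \<and> tag_decision n (st t' q) = Some d' \<longrightarrow> d = d') \<and>
   (\<forall>p \<in> {1..Suc n}. \<forall>t d. tag_decision n (st t p) = Some d \<longrightarrow> d \<in> ktag_prob {1..Suc n} k F V)"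
proof (intro conjI ballI allI impI)
  fix p
  assume "p \<in> {1..Suc n} - Faulty F"
  then show "\<exists>t. tag_decision n (st t p) \<noteq> None"
    by (rule correct_decides)
next
  fix p t d t'
  assume "tag_decision n (st t p) = Some d" and "t \<le> t'"
  then show "tag_decision n (st t' p) = Some d"
    by (rule decision_stable)
next
  fix p q t t' d d'
  assume "tag_decision n (st t p) = Some d \<and> tag_decision n (st t' q) = Some d'"
  then show "d = d'"
    using decision_value by (metis (no_types))
next
  fix p t d
  assume "tag_decision n (st t p) = Some d"
  then show "d \<in> ktag_prob {1..Suc n} k F V"
    using decision_value decision_legal by (metis (no_types))
qed

end

theorem tag_algo_solves:
  assumes "1 \<le> k" and "k \<le> n" and "f \<le> n - 1"
  shows "solves (tag_algo n) (tag_oracles n k f) (kTAg_n (Suc n) k f)"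
proof -
  have task: "procs (kTAg_n (Suc n) k f) = {1..Suc n}" "res (kTAg_n (Suc n) k f) = f"
    "prob (kTAg_n (Suc n) k f) = ktag_prob {1..Suc n} k"
    by (simp_all add: kTAg_n_def kTAg_def)
  have decision: "adec (tag_algo n) = tag_decision n"
    by (simp add: tag_algo_def)
  show ?thesis
    unfolding solves_def task decision
    by (intro allI impI, elim conjE, drule (3) tag_run_if_is_run[OF assms], elim exE,
        rule tag_run.run_correct)
qed

theorem mainTheorem8:
  fixes n f k :: nat
  assumes "1 \<le> f" and "f \<le> n - 1" and "1 \<le> k" and "k \<le> n"
  shows "C_star_red (kTAg_n (n + 1) k f) (kTAg_n n k f)"
proof -
  have "\<forall>\<rho> \<in> set (map skip [0..<Suc n]).
      inj_on \<rho> (procs (kTAg_n n k f)) \<and> \<rho> ` procs (kTAg_n n k f) \<subseteq> procs (kTAg_n (n + 1) k f)"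
    using inj_on_skip by (auto simp: kTAg_n_def kTAg_def skip_def)
  moreover have "solves (tag_algo n) (tag_oracles n k f) (kTAg_n (n + 1) k f)"
    using tag_algo_solves assms(2-4) by simp
  ultimately show ?thesis
    unfolding C_star_red_def tag_oracles_def
    by (intro exI[of _ "map skip [0..<Suc n]"] exI[of _ "tag_algo n"] conjI)
qed

end
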